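(* Let $k\geq 1$ and $p$ a propositional variable. Then $\mathbf{GLP}\vdash[1]Q^k(p)$, and $Q^k(p)$ is a conjunction of $k$ instances of reflection $[0]\chi\to\chi$. Moreover, if $\sigma$ is a substitution such that $\mathbf{GLP}\vdash\bigwedge_{i=1}^j([0]\psi_i\to\psi_i)\to\sigma(p)$ for some $j\leq k$ and some formulas $\psi_1,\dots,\psi_j$, then $\sigma$ is a unifier of $[1]p$ and $\sigma\leq Q^k$. That is, $Q^k$ is the most general unifier of $[1]p$ among those following from at most $k$ instances of reflection.
   Context: $\mathbf{GLP}$ is the propositional polymodal logic with modalities $[0],[1],\dots$ ($\langle k\rangle:=\neg[k]\neg$) axiomatized by classical tautologies; $[k](\phi\to\psi)\to([k]\phi\to[k]\psi)$; $[k]([k]\phi\to\phi)\to[k]\phi$; $\langle j\rangle\phi\to[k]\langle j\rangle\phi$ for $j<k$; $[j]\phi\to[k]\phi$ for $j\leq k$; rules modus ponens and necessitation. A substitution commutes with all connectives and modalities; a unifier of $[1]p$ is a substitution $\sigma$ with $\mathbf{GLP}\vdash[1]\sigma(p)$. $\tau\leq\sigma$ means there is a substitution $\theta$ with $\mathbf{GLP}\vdash\tau(q)\leftrightarrow\theta(\sigma(q))$ for every variable $q$; $Q^k$ also denotes the substitution $p\mapsto Q^k(p)$. Define $Q_1(p):=p$, $Q_{i+1}(p):=p\lor[0]Q_i(p)$, $Q^k(p):=\bigwedge_{i=1}^k([0]Q_i(p)\to Q_i(p))$. *)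

theory Defs
  imports Main
begin

datatype fm = Var nat | Bot | Imp fm fm | Box nat fm

definition Neg :: "fm \<Rightarrow> fm" where "Neg a = Imp a Bot"
definition Top :: fm where "Top = Imp Bot Bot"
definition And :: "fm \<Rightarrow> fm \<Rightarrow> fm" where "And a b = Neg (Imp a (Neg b))"
definition Or :: "fm \<Rightarrow> fm \<Rightarrow> fm" where "Or a b = Imp (Neg a) b"
definition Iff :: "fm \<Rightarrow> fm \<Rightarrow> fm" where "Iff a b = And (Imp a b) (Imp b a)"
definition Dia :: "nat \<Rightarrow> fm \<Rightarrow> fm" where "Dia k a = Neg (Box k (Neg a))"

fun tval :: "(fm \<Rightarrow> bool) \<Rightarrow> fm \<Rightarrow> bool" where
  "tval v (Var q) = v (Var q)"
| "tval v Bot = False"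
| "tval v (Imp a b) = (tval v a \<longrightarrow> tval v b)"
| "tval v (Box k a) = v (Box k a)"

definition tautology :: "fm \<Rightarrow> bool" where
  "tautology a \<longleftrightarrow> (\<forall>v. tval v a)"

inductive GLP :: "fm \<Rightarrow> bool" where
  taut: "tautology a \<Longrightarrow> GLP a"
| K: "GLP (Imp (Box k (Imp a b)) (Imp (Box k a) (Box k b)))"
| Loeb: "GLP (Imp (Box k (Imp (Box k a) a)) (Box k a))"
| neg_intro: "j < k \<Longrightarrow> GLP (Imp (Dia j a) (Box k (Dia j a)))"
| mono: "j \<le> k \<Longrightarrow> GLP (Imp (Box j a) (Box k a))"
| mp: "GLP (Imp a b) \<Longrightarrow> GLP a \<Longrightarrow> GLP b"
| nec: "GLP a \<Longrightarrow> GLP (Box k a)"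

fun subst :: "(nat \<Rightarrow> fm) \<Rightarrow> fm \<Rightarrow> fm" where
  "subst s (Var q) = s q"
| "subst s Bot = Bot"
| "subst s (Imp a b) = Imp (subst s a) (subst s b)"
| "subst s (Box k a) = Box k (subst s a)"

fun conj :: "fm list \<Rightarrow> fm" where
  "conj [] = Top"
| "conj [a] = a"
| "conj (a # as) = And a (conj as)"

definition refl0 :: "fm \<Rightarrow> fm" where "refl0 a = Imp (Box 0 a) a"

text \<open>Q_1(p) = p, Q_{i+1}(p) = p \<or> [0] Q_i(p)  (index 0 is junk, set equal to p).\<close>
fun Qf :: "nat \<Rightarrow> nat \<Rightarrow> fm" where
  "Qf p 0 = Var p"
| "Qf p (Suc 0) = Var p"
| "Qf p (Suc (Suc i)) = Or (Var p) (Box 0 (Qf p (Suc i)))"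

definition Qk :: "nat \<Rightarrow> nat \<Rightarrow> fm" where
  "Qk k p = conj (map (\<lambda>i. refl0 (Qf p i)) [1..<k+1])"

definition Qk_subst :: "nat \<Rightarrow> nat \<Rightarrow> nat \<Rightarrow> fm" where
  "Qk_subst k p = (\<lambda>q. if q = p then Qk k p else Var q)"

definition unifier_box1 :: "(nat \<Rightarrow> fm) \<Rightarrow> nat \<Rightarrow> bool" where
  "unifier_box1 s p \<longleftrightarrow> GLP (Box 1 (s p))"

definition more_general :: "(nat \<Rightarrow> fm) \<Rightarrow> (nat \<Rightarrow> fm) \<Rightarrow> bool" (infix "\<preceq>" 50) where
  "tau \<preceq> sigma \<longleftrightarrow> (\<exists>theta. \<forall>q. GLP (Iff (tau q) (subst theta (sigma q))))"

end

theory Submission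
  imports Defs
begin

(* Every reflection instance [0]\<chi> \<rightarrow> \<chi> is provable under [1]: if [0]\<chi> holds it persists
   to [1] by monotonicity, and if it fails then <0>\<not>\<chi> persists to [1]. Hence every \<sigma>
   with \<sigma>(p) implied by reflection instances unifies [1]p.

   Conversely, let x = \<sigma>(p) follow from [0]\<psi>\<^sub>i \<rightarrow> \<psi>\<^sub>i, i = 1..j. If x fails, some instance
   fails, so [0]\<psi>\<^sub>i holds and, by transitivity, [0](\<psi>\<^sub>i \<and> [0]\<psi>\<^sub>i); under this box one
   premise fewer can fail. Iterating gives \<turnstile> Q\<^sub>j\<^sub>+\<^sub>1(x). Propositionally, Q\<^sub>j\<^sub>+\<^sub>1(x) together
   with the reflections for Q\<^sub>1(x), ..., Q\<^sub>k(x) yields x, and x yields all Q\<^sub>i(x), hence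
   all these reflections. So \<turnstile> x \<leftrightarrow> \<sigma>(Q\<^sup>k(p)), i.e. \<sigma> = \<sigma> \<circ> Q\<^sup>k up to provable
   equivalence. *)

lemma tval_Neg [simp]: "tval v (Neg a) = (\<not> tval v a)"
  by (simp add: Neg_def)

lemma tval_Top [simp]: "tval v Top"
  by (simp add: Top_def)

lemma tval_And [simp]: "tval v (And a b) = (tval v a \<and> tval v b)"
  by (simp add: And_def)

lemma tval_Or [simp]: "tval v (Or a b) = (tval v a \<or> tval v b)"
  by (auto simp add: Or_def)

lemma tval_Iff [simp]: "tval v (Iff a b) = (tval v a = tval v b)"
  by (auto simp add: Iff_def)

lemma tval_refl0 [simp]: "tval v (refl0 a) = (tval v (Box 0 a) \<longrightarrow> tval v a)"
  by (simp add: refl0_def)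

lemma tval_conj [simp]: "tval v (conj as) = (\<forall>a\<in>set as. tval v a)"
  by (induct as rule: conj.induct) auto

fun imp_chain :: "fm list \<Rightarrow> fm \<Rightarrow> fm" where
  "imp_chain [] c = c"
| "imp_chain (h # hs) c = Imp h (imp_chain hs c)"

lemma tval_imp_chain: "tval v (imp_chain hs c) = ((\<forall>h\<in>set hs. tval v h) \<longrightarrow> tval v c)"
  by (induct hs) auto

lemma GLP_imp_chain_tautology:
  assumes "\<And>v. \<forall>h\<in>set hs. tval v h \<Longrightarrow> tval v c"
  shows "GLP (imp_chain hs c)"
  by (rule GLP.taut) (auto simp: tautology_def tval_imp_chain assms)

lemma GLP_imp_chain_mp: "GLP (imp_chain hs c) \<Longrightarrow> \<forall>h\<in>set hs. GLP h \<Longrightarrow> GLP c"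
  by (induct hs) (auto intro: GLP.mp)

lemma GLP_tautological_consequence:
  assumes "\<And>v. \<forall>h\<in>set hs. tval v h \<Longrightarrow> tval v c"
    and "\<forall>h\<in>set hs. GLP h"
  shows "GLP c"
  using GLP_imp_chain_tautology[OF assms(1)] assms(2) by (rule GLP_imp_chain_mp)

lemma GLP_Box_imp_chain:
  assumes "GLP (Imp d (Box k (imp_chain hs c)))"
    and "\<forall>h\<in>set hs. GLP (Imp d (Box k h))"
  shows "GLP (Imp d (Box k c))"
  using assms
proof (induct hs)
  case (Cons h hs)
  have "GLP (Imp (Box k (Imp h (imp_chain hs c))) (Imp (Box k h) (Box k (imp_chain hs c))))"
    by (rule GLP.K)
  with Cons.prems have "GLP (Imp d (Box k (imp_chain hs c)))"
    by (intro GLP_tautological_consequence[of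
          "[Imp (Box k (Imp h (imp_chain hs c))) (Imp (Box k h) (Box k (imp_chain hs c))),
            Imp d (Box k (Imp h (imp_chain hs c))), Imp d (Box k h)]"]) auto
  with Cons show ?case by auto
qed simp

lemma GLP_Box_tautological_consequence:
  assumes "\<And>v. \<forall>h\<in>set hs. tval v h \<Longrightarrow> tval v c"
    and "\<forall>h\<in>set hs. GLP (Imp d (Box k h))"
  shows "GLP (Imp d (Box k c))"
proof -
  have "GLP (Box k (imp_chain hs c))"
    using GLP_imp_chain_tautology[OF assms(1)] by (rule GLP.nec)
  then have "GLP (Imp d (Box k (imp_chain hs c)))"
    by (intro GLP_tautological_consequence[of "[Box k (imp_chain hs c)]"]) auto
  then show ?thesis
    using assms(2) by (rule GLP_Box_imp_chain)
qed

lemma GLP_Box_consequence: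
  assumes "\<And>v. \<forall>h\<in>set hs. tval v h \<Longrightarrow> tval v c"
    and "\<forall>h\<in>set hs. GLP (Box k h)"
  shows "GLP (Box k c)"
proof -
  have "\<forall>h\<in>set hs. GLP (Imp Top (Box k h))"
    using assms(2) by (auto intro: GLP_tautological_consequence[of "[Box k _]"])
  with assms(1) have "GLP (Imp Top (Box k c))"
    by (rule GLP_Box_tautological_consequence)
  then show ?thesis
    by (intro GLP_tautological_consequence[of "[Imp Top (Box k c)]"]) auto
qed

lemma GLP_imp_Box_nec: "GLP c \<Longrightarrow> GLP (Imp d (Box k c))"
  using GLP.nec[of c k] by (intro GLP_tautological_consequence[of "[Box k c]"]) auto

lemma GLP_Iff_refl: "GLP (Iff a a)"
  by (rule GLP.taut) (simp add: tautology_def)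

lemma GLP_Box_trans: "GLP (Imp (Box k a) (Box k (Box k a)))"
proof -
  \<comment> \<open>L\<ouml>b's axiom applied to [k]a \<and> a.\<close>
  define b where "b = And (Box k a) a"
  have b_Box: "GLP (Imp (Box k b) (Box k a))"
    by (rule GLP_Box_tautological_consequence[of "[b]"]) (auto simp: b_def tautology_def intro: GLP.taut)
  have b_Box_Box: "GLP (Imp (Box k b) (Box k (Box k a)))"
    by (rule GLP_Box_tautological_consequence[of "[b]"]) (auto simp: b_def tautology_def intro: GLP.taut)
  have "GLP (Imp a (Imp (Box k b) b))"
    by (rule GLP_tautological_consequence[of "[Imp (Box k b) (Box k a)]"])
       (use b_Box in \<open>auto simp: b_def\<close>)
  then have "GLP (Imp (Box k a) (Box k (Imp (Box k b) b)))"
    by (intro GLP_Box_tautological_consequence[of "[a, Imp a (Imp (Box k b) b)]"])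
       (auto intro: GLP_imp_Box_nec GLP.taut simp: tautology_def)
  with GLP.Loeb[of k b] b_Box_Box show ?thesis
    by (intro GLP_tautological_consequence[of
          "[Imp (Box k a) (Box k (Imp (Box k b) b)), Imp (Box k (Imp (Box k b) b)) (Box k b),
            Imp (Box k b) (Box k (Box k a))]"]) auto
qed

lemma GLP_Box_reflection:
  assumes "j < k"
  shows "GLP (Box k (Imp (Box j a) a))"
proof -
  have holds: "GLP (Imp (Box j a) (Box k (Imp (Box j a) a)))"
    using GLP.mono[of j k a] assms
    by (intro GLP_Box_tautological_consequence[of "[a]"]) auto
  have unneg: "GLP (Imp (Box j (Neg (Neg a))) (Box j a))"
    by (rule GLP_Box_tautological_consequence[of "[Neg (Neg a)]"]) (auto intro: GLP.taut simp: tautology_def)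
  have neg: "GLP (Imp (Box j a) (Box j (Neg (Neg a))))"
    by (rule GLP_Box_tautological_consequence[of "[a]"]) (auto intro: GLP.taut simp: tautology_def)
  have "GLP (Imp (Neg (Box j a)) (Box k (Dia j (Neg a))))"
    using GLP.neg_intro[OF assms, of "Neg a"] unneg
    by (intro GLP_tautological_consequence[of
          "[Imp (Dia j (Neg a)) (Box k (Dia j (Neg a))), Imp (Box j (Neg (Neg a))) (Box j a)]"])
       (auto simp: Dia_def)
  then have fails: "GLP (Imp (Neg (Box j a)) (Box k (Imp (Box j a) a)))"
    using GLP_imp_Box_nec[OF neg]
    by (intro GLP_Box_tautological_consequence[of
          "[Dia j (Neg a), Imp (Box j a) (Box j (Neg (Neg a)))]"]) (auto simp: Dia_def)
  from holds fails show ?thesis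
    by (intro GLP_tautological_consequence[of
          "[Imp (Box j a) (Box k (Imp (Box j a) a)), Imp (Neg (Box j a)) (Box k (Imp (Box j a) a))]"])
       auto
qed

lemma GLP_Box1_conj_refl0: "GLP (Box 1 (conj (map refl0 as)))"
  using GLP_Box_reflection[of 0 1]
  by (intro GLP_Box_consequence[of "map refl0 as"]) (auto simp del: tval_refl0 simp: refl0_def)

lemma GLP_Box1_of_reflections:
  assumes "GLP (Imp (conj (map refl0 psis)) x)"
  shows "GLP (Box 1 x)"
  using GLP_Box1_conj_refl0 GLP.nec[OF assms]
  by (intro GLP_Box_consequence[of "[conj (map refl0 psis), Imp (conj (map refl0 psis)) x]"])
     auto

fun Q :: "fm \<Rightarrow> nat \<Rightarrow> fm" where
  "Q x 0 = x"
| "Q x (Suc 0) = x"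
| "Q x (Suc (Suc i)) = Or x (Box 0 (Q x (Suc i)))"

lemma subst_Qf: "subst s (Qf p i) = Q (s p) i"
  by (induct p i rule: Qf.induct) (auto simp: Or_def Neg_def)

lemma subst_conj: "subst s (conj as) = conj (map (subst s) as)"
  by (induct as rule: conj.induct) (auto simp: And_def Neg_def Top_def)

lemma subst_Qk: "subst s (Qk k p) = conj (map (\<lambda>i. refl0 (Q (s p) i)) [1..<k+1])"
  unfolding Qk_def subst_conj map_map comp_def by (simp add: refl0_def subst_Qf)

lemma tval_Q: "tval v x \<Longrightarrow> tval v (Q x i)"
  by (induct x i rule: Q.induct) auto

lemma tval_Q_descent:
  "\<forall>i\<in>{1..<n}. tval v (refl0 (Q x i)) \<Longrightarrow> tval v (Q x n) \<Longrightarrow> tval v x"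
  by (induct x n rule: Q.induct) auto

definition boxdot :: "fm \<Rightarrow> fm" where
  "boxdot a = And a (Box 0 a)"

lemma tval_boxdot [simp]: "tval v (boxdot a) = (tval v a \<and> tval v (Box 0 a))"
  by (simp add: boxdot_def)

lemma GLP_boxdots_Box_Cons:
  "GLP (Imp (And (conj (map boxdot ts)) (Box 0 a)) (Box 0 (conj (map boxdot (a # ts)))))"
proof (rule GLP_Box_tautological_consequence[of "a # Box 0 a # ts @ map (Box 0) ts"])
  fix v
  assume "\<forall>h\<in>set (a # Box 0 a # ts @ map (Box 0) ts). tval v h"
  then show "tval v (conj (map boxdot (a # ts)))"
    by (auto simp del: tval.simps)
next
  have trans: "GLP (Imp (And (conj (map boxdot ts)) (Box 0 a)) (Box 0 (Box 0 t)))"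
    if "t = a \<or> t \<in> set ts" for t
    using that GLP_Box_trans[of 0 t]
    by (intro GLP_tautological_consequence[of "[Imp (Box 0 t) (Box 0 (Box 0 t))]"]) auto
  have "GLP (Imp (And (conj (map boxdot ts)) (Box 0 a)) (Box 0 t))"
    if "t = a \<or> t \<in> set ts" for t
    using that by (intro GLP.taut) (auto simp: tautology_def)
  with trans show "\<forall>h\<in>set (a # Box 0 a # ts @ map (Box 0) ts).
      GLP (Imp (And (conj (map boxdot ts)) (Box 0 a)) (Box 0 h))"
    by auto
qed

lemma GLP_boxdots_Cons_imp_Box:
  assumes "GLP (Imp (conj (map boxdot (a # ts))) y)"
  shows "GLP (Imp (And (conj (map boxdot ts)) (Box 0 a)) (Box 0 y))"
proof -
  have "GLP (Imp (And (conj (map boxdot ts)) (Box 0 a)) (Box 0 (Imp (conj (map boxdot (a # ts))) y)))"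
    using assms by (rule GLP_imp_Box_nec)
  with GLP_boxdots_Box_Cons[of ts a] show ?thesis
    by (intro GLP_Box_tautological_consequence[of
          "[conj (map boxdot (a # ts)), Imp (conj (map boxdot (a # ts))) y]"])
       (auto simp del: tval_conj)
qed

lemma GLP_boxdots_imp_Or_Box:
  assumes refl: "GLP (Imp (conj (map refl0 psis)) x)"
    and step: "\<And>\<psi>. \<psi> \<in> set psis - set ts \<Longrightarrow>
      GLP (Imp (And (conj (map boxdot ts)) (Box 0 \<psi>)) (Box 0 y))"
  shows "GLP (Imp (conj (map boxdot ts)) (Or x (Box 0 y)))"
proof -
  let ?step = "\<lambda>\<psi>. Imp (And (conj (map boxdot ts)) (Box 0 \<psi>)) (Box 0 y)"
  let ?hyps = "Imp (conj (map refl0 psis)) x # map ?step (filter (\<lambda>\<psi>. \<psi> \<notin> set ts) psis)"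
  show ?thesis
  proof (rule GLP_tautological_consequence[of ?hyps])
    fix v
    assume hyps: "\<forall>h\<in>set ?hyps. tval v h"
    then have refl_v: "tval v (Imp (conj (map refl0 psis)) x)"
      by (simp del: tval.simps)
    show "tval v (Imp (conj (map boxdot ts)) (Or x (Box 0 y)))"
    proof (cases "tval v x")
      case False
      with refl_v obtain \<psi> where \<psi>: "\<psi> \<in> set psis" "tval v (Box 0 \<psi>)" "\<not> tval v \<psi>"
        by auto
      have "tval v (Box 0 y)" if boxdots: "tval v (conj (map boxdot ts))"
      proof -
        from boxdots \<psi>(3) have "\<psi> \<notin> set ts"
          by auto
        with \<psi>(1) have "?step \<psi> \<in> set ?hyps"
          by simp
        with hyps have "tval v (?step \<psi>)"
          by (rule bspec)
        with boxdots \<psi>(2) show ?thesis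
          by (simp del: tval_conj)
      qed
      then show ?thesis
        by (simp del: tval_conj)
    qed simp
  qed (use refl step in simp)
qed

lemma GLP_boxdots_imp_Q:
  assumes refl: "GLP (Imp (conj (map refl0 psis)) x)"
  shows "card (set psis - set ts) \<le> m \<Longrightarrow> GLP (Imp (conj (map boxdot ts)) (Q x (Suc m)))"
proof (induct m arbitrary: ts)
  case 0
  then have "set psis \<subseteq> set ts"
    by auto
  with refl show ?case
  proof (intro GLP_tautological_consequence[of "[Imp (conj (map refl0 psis)) x]"])
    fix v
    assume "set psis \<subseteq> set ts" and "\<forall>h\<in>set [Imp (conj (map refl0 psis)) x]. tval v h"
    then show "tval v (Imp (conj (map boxdot ts)) (Q x (Suc 0)))"
      by (simp add: subset_iff)
  qed simp
next
  case (Suc m)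
  have "GLP (Imp (And (conj (map boxdot ts)) (Box 0 \<psi>)) (Box 0 (Q x (Suc m))))"
    if new: "\<psi> \<in> set psis - set ts" for \<psi>
  proof (rule GLP_boxdots_Cons_imp_Box, rule Suc.hyps)
    have "set psis - set (\<psi> # ts) = (set psis - set ts) - {\<psi>}"
      by auto
    with new Suc.prems show "card (set psis - set (\<psi> # ts)) \<le> m"
      by (simp add: card_Diff_singleton)
  qed
  with refl have "GLP (Imp (conj (map boxdot ts)) (Or x (Box 0 (Q x (Suc m)))))"
    by (rule GLP_boxdots_imp_Or_Box)
  then show ?case
    by simp
qed

lemma GLP_Q_of_reflections:
  assumes "GLP (Imp (conj (map refl0 psis)) x)"
  shows "GLP (Q x (Suc (length psis)))"
proof -
  have "GLP (Imp (conj (map boxdot [])) (Q x (Suc (length psis))))"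
    using GLP_boxdots_imp_Q[OF assms, of "[]"] card_length[of psis] by simp
  then show ?thesis
    by (intro GLP_tautological_consequence[of "[Imp Top (Q x (Suc (length psis)))]"]) auto
qed

lemma GLP_Iff_reflections_Q:
  assumes "GLP (Imp (conj (map refl0 psis)) x)" and "length psis \<le> k"
  shows "GLP (Iff x (conj (map (\<lambda>i. refl0 (Q x i)) [1..<k+1])))"
  using GLP_Q_of_reflections[OF assms(1)]
proof (intro GLP_tautological_consequence[of "[Q x (Suc (length psis))]"])
  fix v
  assume "\<forall>h\<in>set [Q x (Suc (length psis))]. tval v h"
  then have Q_v: "tval v (Q x (Suc (length psis)))"
    by simp
  have "tval v x" if "tval v (conj (map (\<lambda>i. refl0 (Q x i)) [1..<k+1]))"
  proof (rule tval_Q_descent[OF _ Q_v])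
    show "\<forall>i\<in>{1..<Suc (length psis)}. tval v (refl0 (Q x i))"
    proof
      fix i
      assume "i \<in> {1..<Suc (length psis)}"
      with assms(2) have "i \<in> set [1..<k+1]"
        by auto
      then have "refl0 (Q x i) \<in> set (map (\<lambda>i. refl0 (Q x i)) [1..<k+1])"
        by (simp only: set_map) (rule imageI)
      with that[unfolded tval_conj] show "tval v (refl0 (Q x i))"
        by (rule bspec)
    qed
  qed
  moreover have "tval v (conj (map (\<lambda>i. refl0 (Q x i)) [1..<k+1]))" if "tval v x"
    using tval_Q[OF that] by simp
  ultimately show "tval v (Iff x (conj (map (\<lambda>i. refl0 (Q x i)) [1..<k+1])))"
    by (simp only: tval_Iff) blast
qed simp

theorem mainTheorem12:
  fixes k p :: nat
  assumes "k \<ge> 1"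
  shows "GLP (Box 1 (Qk k p))
    \<and> (\<exists>chis. length chis = k \<and> Qk k p = conj (map refl0 chis))
    \<and> (\<forall>s j psis. j \<le> k \<and> length psis = j
          \<and> GLP (Imp (conj (map refl0 psis)) (s p))
          \<longrightarrow> unifier_box1 s p \<and> s \<preceq> Qk_subst k p)"
proof (intro conjI allI impI)
  have Qk_refl0: "Qk k p = conj (map refl0 (map (Qf p) [1..<k+1]))"
    by (simp add: Qk_def comp_def)
  then show "GLP (Box 1 (Qk k p))"
    by (simp only: GLP_Box1_conj_refl0)
  from Qk_refl0 show "\<exists>chis. length chis = k \<and> Qk k p = conj (map refl0 chis)"
    by (intro exI[of _ "map (Qf p) [1..<k+1]"]) simp
next
  fix s j psis
  assume "j \<le> k \<and> length psis = j \<and> GLP (Imp (conj (map refl0 psis)) (s p))"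
  then have refl: "GLP (Imp (conj (map refl0 psis)) (s p))" and "length psis \<le> k"
    by auto
  from refl show "unifier_box1 s p"
    unfolding unifier_box1_def by (rule GLP_Box1_of_reflections)
  have "GLP (Iff (s q) (subst s (Qk_subst k p q)))" for q
    using GLP_Iff_reflections_Q[OF refl \<open>length psis \<le> k\<close>]
    by (simp add: Qk_subst_def subst_Qk GLP_Iff_refl)
  then show "s \<preceq> Qk_subst k p"
    unfolding more_general_def by blast
qed

end
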